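(* Let $M$ be a positive integer, $a=1/M$, and $N\ge 1$ a fixed interaction range. For a $2M$-periodic displacement $u=(u_\ell)_{\ell\in\mathbb{Z}}$ define the linearized continuum energy $$E^{c,lin}(u)=\sum_{\ell=-M+1}^{M}\sum_{\substack{k=-N\\k\neq 0}}^{N}\frac{a}{2}\Big(\frac{k^2}{2}(u'_\ell)^2\phi_{xx}(k)\Big)$$ and the linearized atomistic energy $$E^{a,lin}(u)=\sum_{\ell=-M+1}^{M}\sum_{\substack{k=-N\\k\neq 0}}^{N}\frac{a}{2}\Big(\frac12\Big(\frac{u_{\ell+k}-u_\ell}{a}\Big)^2\phi_{xx}(k)\Big),$$ where the deformed configuration is $y_\ell=x_\ell+u_\ell$ with $x_\ell=a\ell$. Then the consistency error between the linearized continuum energy and the linearized atomistic energy is $O(a^2)$, i.e. $E^{c,lin}(u)-E^{a,lin}(u)=O(a^2)$.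
   Context: $\phi:\mathbb{R}\to\mathbb{R}$ is a Lennard-Jones type pair potential with $\phi(r)=\phi(|r|)$, at least four times differentiable, $\phi_{xx}(1)>0$ and $\phi_{xx}(k)\le 0$ for $k\ge 2$; $\phi_{xx}$ denotes its second derivative. Displacements are $2M$-periodic: $u_{\ell+2M}=u_\ell$. The discrete derivative is $u'_\ell=(u_{\ell+1}-u_\ell)/a$. The $O(a^2)$ is understood as $a\to 0$ with $u$ given as the lattice values $u_\ell=\widetilde u(a\ell)$ of its smooth periodic interpolant $\widetilde u$ (the paper uses the periodic quintic spline interpolant, $C^4$ across nodes), the implied constant depending on $N$, $\phi$ and derivatives of $\widetilde u$. *)

theory Defs
  imports "HOL-Analysis.Analysis"
begin

definition phi_xx :: "(real \<Rightarrow> real) \<Rightarrow> real \<Rightarrow> real" where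
  "phi_xx phi r = (deriv ^^ 2) phi r"

definition lat_a :: "nat \<Rightarrow> real" where
  "lat_a M = 1 / real M"

definition ddiff :: "nat \<Rightarrow> (int \<Rightarrow> real) \<Rightarrow> int \<Rightarrow> real" where
  "ddiff M u l = (u (l + 1) - u l) / lat_a M"

definition E_c_lin :: "(real \<Rightarrow> real) \<Rightarrow> nat \<Rightarrow> nat \<Rightarrow> (int \<Rightarrow> real) \<Rightarrow> real" where
  "E_c_lin phi N M u =
     (\<Sum>l\<in>{-int M + 1..int M}. \<Sum>k\<in>{-int N..int N} - {0}.
        lat_a M / 2 * ((of_int k)^2 / 2 * (ddiff M u l)^2 * phi_xx phi (of_int k)))"

definition E_a_lin :: "(real \<Rightarrow> real) \<Rightarrow> nat \<Rightarrow> nat \<Rightarrow> (int \<Rightarrow> real) \<Rightarrow> real" where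
  "E_a_lin phi N M u =
     (\<Sum>l\<in>{-int M + 1..int M}. \<Sum>k\<in>{-int N..int N} - {0}.
        lat_a M / 2 * (1 / 2 * ((u (l + k) - u l) / lat_a M)^2 * phi_xx phi (of_int k)))"

end

(* Exchanging the two sums, E_c_lin - E_a_lin = sum_k a/4 phi_xx(k) S_k with the defect
   S_k = sum_l (k^2 (u'_l)^2 - ((u_(l+k) - u_l)/a)^2) over one period.  Writing
   (u_(l+k) - u_l)/a as a sum of |k| consecutive values of u' and shifting indices by
   periodicity, S_k is exactly half the sum of the squares (u'_(l+i) - u'_(l+j))^2, i, j < |k|.
   By the mean value theorem each u'_n is a value of ut', and ut'' is continuous and periodic,
   hence bounded, so these differences are O(|k| a); summed over the 2M = 2/a sites this gives
   S_k = O(a), hence the O(a^2) bound. *)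

theory Submission
  imports Defs "HOL-Library.Periodic_Fun"
begin

lemma sum_shift_one_periodic:
  fixes f :: "int \<Rightarrow> 'a::comm_monoid_add"
  assumes per: "\<And>l. f (l + p) = f l"
  shows "(\<Sum>l\<in>{lo..<lo+p}. f (l + 1)) = (\<Sum>l\<in>{lo..<lo+p}. f l)"
proof (cases "p > 0")
  case True
  have "(\<Sum>l\<in>{lo..<lo+p}. f (l + 1)) = (\<Sum>l\<in>{lo+1..<lo+p+1}. f l)"
    by (rule sum.reindex_bij_witness[where i="\<lambda>l. l - 1" and j="\<lambda>l. l + 1"]) auto
  also have "{lo+1..<lo+p+1} = insert (lo+p) {lo+1..<lo+p}"
    using True by auto
  also have "{lo..<lo+p} = insert lo {lo+1..<lo+p}"
    using True by auto
  ultimately show ?thesis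
    using per[of lo] by (simp add: add.commute)
qed simp

lemma sum_shift_periodic:
  fixes f :: "int \<Rightarrow> 'a::comm_monoid_add"
  assumes per: "\<And>l. f (l + p) = f l"
  shows "(\<Sum>l\<in>{lo..<lo+p}. f (l + c)) = (\<Sum>l\<in>{lo..<lo+p}. f l)"
proof -
  have per_shifted: "f (l + p + d) = f (l + d)" for l d
    using per[of "l + d"] by (simp add: ac_simps)
  have step: "(\<Sum>l\<in>{lo..<lo+p}. f (l + 1 + d)) = (\<Sum>l\<in>{lo..<lo+p}. f (l + d))" for d
    using sum_shift_one_periodic[where f="\<lambda>l. f (l + d)", OF per_shifted] by simp
  show ?thesis
  proof (induction c rule: int_induct[where k=0])
    case (step1 c)
    then show ?case
      using step[of c] by (simp add: ac_simps)
  next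
    case (step2 c)
    then show ?case
      using step[of "c - 1"] by (simp add: ac_simps)
  qed simp
qed

lemma power2_sum_eq_card_sum_power2:
  fixes x :: "'i \<Rightarrow> real"
  shows "(\<Sum>j\<in>A. x j)^2 = card A * (\<Sum>j\<in>A. (x j)^2) - (\<Sum>i\<in>A. \<Sum>j\<in>A. (x i - x j)^2) / 2"
proof -
  have "(\<Sum>i\<in>A. \<Sum>j\<in>A. (x i - x j)^2)
        = (\<Sum>i\<in>A. \<Sum>j\<in>A. (x i)^2) + (\<Sum>i\<in>A. \<Sum>j\<in>A. (x j)^2) - 2 * (\<Sum>i\<in>A. \<Sum>j\<in>A. x i * x j)"
    by (simp add: power2_diff sum.distrib sum_subtractf sum_distrib_left mult.assoc)
  also have "(\<Sum>i\<in>A. \<Sum>j\<in>A. (x i)^2) = card A * (\<Sum>j\<in>A. (x j)^2)"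
    by (simp add: sum_distrib_left mult.commute)
  also have "(\<Sum>i\<in>A. \<Sum>j\<in>A. (x j)^2) = card A * (\<Sum>j\<in>A. (x j)^2)"
    by simp
  also have "(\<Sum>i\<in>A. \<Sum>j\<in>A. x i * x j) = (\<Sum>j\<in>A. x j)^2"
    by (simp add: power2_eq_square sum_product)
  finally show ?thesis
    by linarith
qed

lemma periodic_sum_strain_defect_nat:
  fixes u :: "int \<Rightarrow> real" and h :: real
  assumes per: "\<And>l. u (l + p) = u l"
  defines "w \<equiv> \<lambda>l. (u (l + 1) - u l) / h"
  shows "(\<Sum>l\<in>{lo..<lo+p}. (real m)^2 * (w l)^2 - ((u (l + int m) - u l) / h)^2)
       = (\<Sum>l\<in>{lo..<lo+p}. \<Sum>i<m. \<Sum>j<m. (w (l + int i) - w (l + int j))^2) / 2"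
proof -
  let ?I = "{lo..<lo+p}"
  have w_per: "w (l + p) = w l" for l
    using per[of "l + 1"] per[of l] by (simp add: w_def ac_simps)
  have quotient_eq: "(u (l + int m) - u l) / h = (\<Sum>j<m. w (l + int j))" for l
  proof -
    have "(\<Sum>j<m. w (l + int j)) = (\<Sum>j<m. u (l + int (Suc j)) - u (l + int j)) / h"
      by (simp add: w_def sum_divide_distrib ac_simps)
    then show ?thesis
      by (simp only: sum_lessThan_telescope[of "\<lambda>j. u (l + int j)"]) simp
  qed
  have "(\<Sum>l\<in>?I. \<Sum>j<m. (w (l + int j))^2) = (\<Sum>j<m. \<Sum>l\<in>?I. (w (l + int j))^2)"
    by (rule sum.swap)
  also have "\<dots> = (\<Sum>j<m. \<Sum>l\<in>?I. (w l)^2)"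
  proof (rule sum.cong[OF refl])
    show "(\<Sum>l\<in>?I. (w (l + int j))^2) = (\<Sum>l\<in>?I. (w l)^2)" for j
      by (rule sum_shift_periodic) (simp add: w_per)
  qed
  finally have shifted_squares: "(\<Sum>l\<in>?I. \<Sum>j<m. (w (l + int j))^2) = m * (\<Sum>l\<in>?I. (w l)^2)"
    by simp
  show ?thesis
    unfolding quotient_eq power2_sum_eq_card_sum_power2 card_lessThan
    using shifted_squares
    by (simp add: sum_subtractf sum.distrib sum_distrib_left[symmetric] sum_divide_distrib[symmetric]
        power2_eq_square algebra_simps)
qed

lemma periodic_sum_backward_difference:
  fixes u :: "int \<Rightarrow> real" and g :: "real \<Rightarrow> 'a::comm_monoid_add"
  assumes per: "\<And>l. u (l + p) = u l" and g_even: "\<And>x. g (- x) = g x"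
  shows "(\<Sum>l\<in>{lo..<lo+p}. g (u (l - c) - u l)) = (\<Sum>l\<in>{lo..<lo+p}. g (u (l + c) - u l))"
proof -
  have "(\<Sum>l\<in>{lo..<lo+p}. g (u (l - c) - u l)) = (\<Sum>l\<in>{lo..<lo+p}. g (u (l + c - c) - u (l + c)))"
    by (rule sum_shift_periodic[where f="\<lambda>l. g (u (l - c) - u l)", symmetric])
      (metis per diff_add_eq)
  also have "\<dots> = (\<Sum>l\<in>{lo..<lo+p}. g (u (l + c) - u l))"
    using g_even by (metis (no_types, opaque_lifting) add_diff_cancel minus_diff_eq)
  finally show ?thesis .
qed

lemma periodic_sum_strain_defect:
  fixes u :: "int \<Rightarrow> real" and h :: real and k :: int
  assumes per: "\<And>l. u (l + p) = u l"
  defines "w \<equiv> \<lambda>l. (u (l + 1) - u l) / h" and "m \<equiv> nat \<bar>k\<bar>"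
  shows "(\<Sum>l\<in>{lo..<lo+p}. (of_int k)^2 * (w l)^2 - ((u (l + k) - u l) / h)^2)
       = (\<Sum>l\<in>{lo..<lo+p}. \<Sum>i<m. \<Sum>j<m. (w (l + int i) - w (l + int j))^2) / 2"
proof -
  have "(\<Sum>l\<in>{lo..<lo+p}. ((u (l + k) - u l) / h)^2) = (\<Sum>l\<in>{lo..<lo+p}. ((u (l + int m) - u l) / h)^2)"
  proof (cases "k \<ge> 0")
    case False
    then have "k = - int m" by (simp add: m_def)
    then show ?thesis
      using per periodic_sum_backward_difference[where g="\<lambda>x. (x / h)^2" and c="int m"]
      by simp
  qed (simp add: m_def)
  moreover have "(of_int k)^2 = (real m)^2"
    by (simp add: m_def)
  ultimately show ?thesis
    using per periodic_sum_strain_defect_nat[where h=h and m=m and lo=lo]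
    unfolding w_def sum_subtractf by simp
qed

lemma periodic_sum_strain_defect_bound:
  fixes u :: "int \<Rightarrow> real" and h D :: real and k :: int
  assumes per: "\<And>l. u (l + p) = u l" and p_nonneg: "p \<ge> 0"
  defines "w \<equiv> \<lambda>l. (u (l + 1) - u l) / h"
  assumes w_lip: "\<And>n1 n2. \<bar>w n1 - w n2\<bar> \<le> D * (\<bar>of_int (n1 - n2)\<bar> + 1)"
  shows "\<bar>\<Sum>l\<in>{lo..<lo+p}. (of_int k)^2 * (w l)^2 - ((u (l + k) - u l) / h)^2\<bar>
         \<le> of_int p * (of_int k)^4 * D^2 / 2"
proof -
  define m where "m = nat \<bar>k\<bar>"
  define R where "R = (\<Sum>l\<in>{lo..<lo+p}. \<Sum>i<m. \<Sum>j<m. (w (l + int i) - w (l + int j))^2)"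
  have D_nonneg: "0 \<le> D"
    using w_lip[of 0 0] by simp
  have pair_bound: "(w (l + int i) - w (l + int j))^2 \<le> (D * m)^2" if "i < m" "j < m" for l i j
  proof -
    have "\<bar>w (l + int i) - w (l + int j)\<bar> \<le> D * (\<bar>of_int (int i - int j)\<bar> + 1)"
      using w_lip[of "l + int i" "l + int j"] by simp
    also have "\<dots> \<le> D * m"
      using that D_nonneg by (intro mult_left_mono) auto
    finally show ?thesis
      by (metis abs_ge_zero power2_abs power_mono)
  qed
  have "R \<le> (\<Sum>l\<in>{lo..<lo+p}. \<Sum>i<m. \<Sum>j<m. (D * m)^2)"
    unfolding R_def by (intro sum_mono pair_bound) auto
  also have "\<dots> = of_int p * (of_int k)^4 * D^2"
    using p_nonneg by (simp add: m_def power2_eq_square power4_eq_xxxx)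
  finally have "R \<le> of_int p * (of_int k)^4 * D^2" .
  moreover have "0 \<le> R"
    unfolding R_def by (intro sum_nonneg) auto
  moreover have "(\<Sum>l\<in>{lo..<lo+p}. (of_int k)^2 * (w l)^2 - ((u (l + k) - u l) / h)^2) = R / 2"
    unfolding R_def m_def w_def by (rule periodic_sum_strain_defect) (rule per)
  ultimately show ?thesis
    by simp
qed

lemma deriv_periodic:
  fixes f :: "real \<Rightarrow> real"
  assumes f_diff: "\<And>x. f differentiable at x" and per: "\<And>x. f (x + p) = f x"
  shows "deriv f (x + p) = deriv f x"
proof -
  have "(f has_real_derivative deriv f (x + p)) (at (x + p))"
    using f_diff by (simp add: DERIV_deriv_iff_real_differentiable)
  then have "((\<lambda>x. f (x + p)) has_real_derivative deriv f (x + p)) (at x)"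
    by (simp add: DERIV_shift)
  then show ?thesis
    using per by (simp add: DERIV_imp_deriv)
qed

lemma periodic_continuous_bounded:
  fixes f :: "real \<Rightarrow> real"
  assumes "p > 0" and per: "\<And>x. f (x + p) = f x" and "continuous_on UNIV f"
  obtains B where "\<And>x. \<bar>f x\<bar> \<le> B"
proof -
  interpret periodic_fun_simple f p
    by standard (rule per)
  obtain B where B: "\<And>x. x \<in> {0..p} \<Longrightarrow> norm (f x) \<le> B"
    using continuous_on_compact_bound[OF compact_Icc continuous_on_subset[OF \<open>continuous_on UNIV f\<close> subset_UNIV]]
    by metis
  have "\<bar>f x\<bar> \<le> B" for x
  proof -
    define n where "n = \<lfloor>x / p\<rfloor>"
    have "of_int n * p \<le> x" "x < (of_int n + 1) * p"
      unfolding n_def using floor_divide_lower floor_divide_upper \<open>p > 0\<close> by blast+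
    then have "x - of_int n * p \<in> {0..p}"
      by (simp add: distrib_right)
    then have "\<bar>f (x - of_int n * p)\<bar> \<le> B"
      using B by simp
    then show ?thesis
      by (simp only: minus_of_int)
  qed
  then show ?thesis by (rule that)
qed

lemma difference_quotient_lipschitz:
  fixes f :: "real \<Rightarrow> real"
  assumes f_diff: "\<And>x. f differentiable at x" and f'_diff: "\<And>x. deriv f differentiable at x"
    and f''_bound: "\<And>x. \<bar>deriv (deriv f) x\<bar> \<le> B" and "h > 0"
  shows "\<bar>(f (x + h) - f x) / h - (f (y + h) - f y) / h\<bar> \<le> B * (\<bar>x - y\<bar> + h)"
proof -
  have mean_value: "\<exists>\<xi>. t < \<xi> \<and> \<xi> < t + h \<and> (f (t + h) - f t) / h = deriv f \<xi>" for t
  proof -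
    obtain \<xi> where "t < \<xi>" "\<xi> < t + h" "f (t + h) - f t = (t + h - t) * deriv f \<xi>"
      using MVT2[of t "t + h" f "deriv f"] \<open>h > 0\<close> f_diff
      by (auto simp: DERIV_deriv_iff_real_differentiable)
    then show ?thesis
      using \<open>h > 0\<close> by auto
  qed
  obtain \<xi> \<eta> where \<xi>: "x < \<xi>" "\<xi> < x + h" "(f (x + h) - f x) / h = deriv f \<xi>"
    and \<eta>: "y < \<eta>" "\<eta> < y + h" "(f (y + h) - f y) / h = deriv f \<eta>"
    using mean_value[of x] mean_value[of y] by blast
  have "\<bar>deriv f \<xi> - deriv f \<eta>\<bar> \<le> B * \<bar>\<xi> - \<eta>\<bar>"
    using field_differentiable_bound[of UNIV "deriv f" "deriv (deriv f)" B \<xi> \<eta>] f'_diff f''_bound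
    by (simp add: DERIV_deriv_iff_real_differentiable)
  also have "\<dots> \<le> B * (\<bar>x - y\<bar> + h)"
    using \<xi> \<eta> f''_bound[of 0] by (intro mult_left_mono) auto
  finally show ?thesis
    using \<xi> \<eta> by simp
qed

lemma E_c_lin_minus_E_a_lin:
  "E_c_lin phi N M u - E_a_lin phi N M u =
     (\<Sum>k\<in>{-int N..int N} - {0}. lat_a M / 4 * phi_xx phi (of_int k) *
        (\<Sum>l\<in>{-int M + 1..int M}. (of_int k)^2 * (ddiff M u l)^2 - ((u (l + k) - u l) / lat_a M)^2))"
  unfolding E_c_lin_def E_a_lin_def sum_subtractf[symmetric]
  by (subst sum.swap) (simp add: sum_distrib_left algebra_simps)

lemma E_c_lin_minus_E_a_lin_bound:
  fixes u :: "int \<Rightarrow> real" and D :: real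
  assumes "M \<ge> 1" and per: "\<And>l. u (l + 2 * int M) = u l"
    and ddiff_lip: "\<And>n1 n2. \<bar>ddiff M u n1 - ddiff M u n2\<bar> \<le> D * (\<bar>of_int (n1 - n2)\<bar> + 1)"
  shows "\<bar>E_c_lin phi N M u - E_a_lin phi N M u\<bar>
         \<le> D^2 / 4 * (\<Sum>k\<in>{-int N..int N} - {0}. \<bar>phi_xx phi (of_int k)\<bar> * (of_int k)^4)"
proof -
  define a where "a = lat_a M"
  define S where "S k = (\<Sum>l\<in>{-int M + 1..int M}. (of_int k)^2 * (ddiff M u l)^2 - ((u (l + k) - u l) / a)^2)"
    for k
  have a_pos: "a > 0" and aM: "a * M = 1"
    using \<open>M \<ge> 1\<close> by (auto simp: a_def lat_a_def)
  have S_bound: "\<bar>S k\<bar> \<le> M * (of_int k)^4 * D^2" for k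
  proof -
    have "{-int M + 1..int M} = {-int M + 1..<-int M + 1 + 2 * int M}"
      by auto
    then show ?thesis
      using per ddiff_lip
        periodic_sum_strain_defect_bound[where u=u and p="2 * int M" and h=a and D=D and lo="-int M + 1" and k=k]
      by (simp add: S_def ddiff_def a_def)
  qed
  have "\<bar>E_c_lin phi N M u - E_a_lin phi N M u\<bar>
        \<le> (\<Sum>k\<in>{-int N..int N} - {0}. \<bar>a / 4 * phi_xx phi (of_int k) * S k\<bar>)"
    unfolding E_c_lin_minus_E_a_lin S_def a_def by (rule sum_abs)
  also have "\<dots> \<le> (\<Sum>k\<in>{-int N..int N} - {0}. a / 4 * \<bar>phi_xx phi (of_int k)\<bar> * (M * (of_int k)^4 * D^2))"
    using a_pos S_bound by (intro sum_mono) (simp add: abs_mult mult_left_mono)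
  also have "\<dots> = (\<Sum>k\<in>{-int N..int N} - {0}. (a * M) * (D^2 / 4 * (\<bar>phi_xx phi (of_int k)\<bar> * (of_int k)^4)))"
    by (simp add: algebra_simps)
  also have "\<dots> = D^2 / 4 * (\<Sum>k\<in>{-int N..int N} - {0}. \<bar>phi_xx phi (of_int k)\<bar> * (of_int k)^4)"
    by (simp only: aM mult_1 sum_distrib_left)
  finally show ?thesis .
qed

theorem proposition1:
  fixes phi :: "real \<Rightarrow> real" and ut :: "real \<Rightarrow> real" and N :: nat
  assumes N_pos: "N \<ge> 1"
    and phi_even: "\<And>r. phi r = phi \<bar>r\<bar>"
    and phi_diff: "\<And>j x. j < 4 \<Longrightarrow> x \<noteq> 0 \<Longrightarrow> (deriv ^^ j) phi differentiable (at x)"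
    and phi_xx_1: "phi_xx phi 1 > 0"
    and phi_xx_k: "\<And>k::nat. k \<ge> 2 \<Longrightarrow> phi_xx phi (real k) \<le> 0"
    and ut_per: "\<And>x. ut (x + 2) = ut x"
    and ut_diff: "\<And>j x. j < 4 \<Longrightarrow> (deriv ^^ j) ut differentiable (at x)"
    and ut_cont4: "continuous_on UNIV ((deriv ^^ 4) ut)"
  shows "\<exists>C. \<forall>M::nat. M \<ge> 1 \<longrightarrow>
           \<bar>E_c_lin phi N M (\<lambda>l. ut (lat_a M * of_int l))
            - E_a_lin phi N M (\<lambda>l. ut (lat_a M * of_int l))\<bar> \<le> C * (lat_a M)^2"
proof -
  have ut'_diff: "\<And>x. ut differentiable at x" "\<And>x. deriv ut differentiable at x"
    and ut''_diff: "\<And>x. deriv (deriv ut) differentiable at x"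
    using ut_diff[of 0] ut_diff[of 1] ut_diff[of 2] by (simp_all add: numeral_2_eq_2)
  have ut'_per: "\<And>x. deriv ut (x + 2) = deriv ut x"
    by (rule deriv_periodic) (simp_all add: ut'_diff ut_per)
  have "\<And>x. deriv (deriv ut) (x + 2) = deriv (deriv ut) x"
    by (rule deriv_periodic) (simp_all add: ut'_diff ut'_per)
  moreover have "continuous_on UNIV (deriv (deriv ut))"
    using ut''_diff by (simp add: continuous_at_imp_continuous_on differentiable_imp_continuous_within)
  ultimately obtain B where B: "\<And>x. \<bar>deriv (deriv ut) x\<bar> \<le> B"
    using periodic_continuous_bounded[where p=2 and f="deriv (deriv ut)"] by auto
  define C where "C = B^2 / 4 * (\<Sum>k\<in>{-int N..int N} - {0}. \<bar>phi_xx phi (of_int k)\<bar> * (of_int k)^4)"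
  have "\<bar>E_c_lin phi N M (\<lambda>l. ut (lat_a M * of_int l)) - E_a_lin phi N M (\<lambda>l. ut (lat_a M * of_int l))\<bar>
        \<le> C * (lat_a M)^2" if "M \<ge> 1" for M
  proof -
    define a where "a = lat_a M"
    define u where "u = (\<lambda>l. ut (a * of_int l))"
    have a_pos: "a > 0" and aM: "a * M = 1"
      using \<open>M \<ge> 1\<close> by (auto simp: a_def lat_a_def)
    have u_per: "u (l + 2 * int M) = u l" for l
    proof -
      have "a * of_int (l + 2 * int M) = a * of_int l + 2 * (a * M)"
        by (simp add: algebra_simps)
      then show ?thesis
        using ut_per aM by (simp add: u_def)
    qed
    have u_lip: "\<bar>ddiff M u n1 - ddiff M u n2\<bar> \<le> B * a * (\<bar>of_int (n1 - n2)\<bar> + 1)" for n1 n2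
    proof -
      have "ddiff M u n = (ut (a * of_int n + a) - ut (a * of_int n)) / a" for n
        by (simp add: ddiff_def u_def a_def distrib_left)
      then have "\<bar>ddiff M u n1 - ddiff M u n2\<bar> \<le> B * (\<bar>a * of_int n1 - a * of_int n2\<bar> + a)"
        using difference_quotient_lipschitz[OF ut'_diff B a_pos] by simp
      also have "\<bar>a * of_int n1 - a * of_int n2\<bar> = a * \<bar>of_int (n1 - n2)\<bar>"
        using a_pos by (simp add: abs_mult flip: right_diff_distrib)
      finally show ?thesis
        by (simp add: distrib_left mult.assoc)
    qed
    have "\<bar>E_c_lin phi N M u - E_a_lin phi N M u\<bar>
          \<le> (B * a)^2 / 4 * (\<Sum>k\<in>{-int N..int N} - {0}. \<bar>phi_xx phi (of_int k)\<bar> * (of_int k)^4)"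
      by (rule E_c_lin_minus_E_a_lin_bound[OF that u_per u_lip])
    also have "\<dots> = C * a^2"
      by (simp add: C_def power_mult_distrib)
    finally show ?thesis
      unfolding u_def a_def .
  qed
  then show ?thesis
    by blast
qed

end
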